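(* Let $H$ be a real Hilbert space and let $T\in K(H)$ be a non-zero compact operator. Then the following are equivalent: (i) $T$ is $\varepsilon$-smooth for some $\varepsilon\in[0,2)$; (ii) $M_T=\{\pm x_0\}$ for some $x_0\in S_H$; (iii) $T$ is smooth.
   Context: Smoothness notions for $T$ refer to $T$ as an element of the space $L(H)$ of bounded linear operators on $H$ with the operator norm. For a normed space $Z$ and $z\in Z\setminus\{\theta\}$, $J(z)=\{\phi\in S_{Z^*}:\phi(z)=\|z\|\}$; $z$ is smooth if $J(z)$ is a singleton and $\varepsilon$-smooth if $\operatorname{diam}J(z)=\sup_{\phi,\psi\in J(z)}\|\phi-\psi\|\le\varepsilon$. $M_T=\{x\in S_H:\|Tx\|=\|T\|\}$ is the norm attainment set of $T$. *)

theory Defs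
  imports "HOL-Analysis.Analysis"
begin

definition support_functionals :: "'z::real_normed_vector \<Rightarrow> ('z \<Rightarrow>\<^sub>L real) set" where
  "support_functionals z = {\<phi>. norm \<phi> = 1 \<and> blinfun_apply \<phi> z = norm z}"

definition smooth_point :: "'z::real_normed_vector \<Rightarrow> bool" where
  "smooth_point z \<longleftrightarrow> z \<noteq> 0 \<and> (\<exists>\<phi>. support_functionals z = {\<phi>})"

definition eps_smooth_point :: "'z::real_normed_vector \<Rightarrow> real \<Rightarrow> bool" where
  "eps_smooth_point z \<epsilon> \<longleftrightarrow> z \<noteq> 0 \<and>
     (\<forall>\<phi>\<in>support_functionals z. \<forall>\<psi>\<in>support_functionals z. norm (\<phi> - \<psi>) \<le> \<epsilon>)"

definition compact_operator :: "('a::real_normed_vector \<Rightarrow>\<^sub>L 'b::real_normed_vector) \<Rightarrow> bool" where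
  "compact_operator T \<longleftrightarrow> compact (closure (blinfun_apply T ` ball 0 1))"

definition norm_attainment_set :: "('a::real_normed_vector \<Rightarrow>\<^sub>L 'b::real_normed_vector) \<Rightarrow> 'a set" where
  "norm_attainment_set T = {x. norm x = 1 \<and> norm (blinfun_apply T x) = norm T}"

end

theory Submission
  imports Defs
begin

(* Compactness and the parallelogram law make every maximizing sequence of unit vectors of T
   subconverge to a point of M_T, so M_T is nonempty and unit vectors x with ||Tx|| close to ||T||
   are close to M_T.  Each x in M_T yields the support functional A |-> <Ax, Tx> / ||T|| of T.
   On the vectors where T attains its norm, T is ||T|| times an isometry; so if M_T is not {x0, -x0}
   it contains orthonormal x and u, and testing on T composed with the map that fixes x, negates u
   and kills the rest shows that their functionals are at distance 2, excluding eps < 2.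
   Conversely, if M_T = {x0, -x0}, every support functional phi satisfies
   phi(A) <= (||T + tA|| - ||T||) / t for t > 0, and since near-maximizers of T are near x0 or -x0
   the right-hand side is at most <Ax0, Tx0> / ||T|| + o(1); applied to A and -A this pins phi down
   as the functional of x0. *)

lemma norm_blinfun_le_unit:
  fixes f :: "'a::real_normed_vector \<Rightarrow>\<^sub>L 'b::real_normed_vector"
  assumes "0 \<le> K" and "\<And>x. norm x = 1 \<Longrightarrow> norm (f x) \<le> K"
  shows "norm f \<le> K"
proof (rule norm_blinfun_bound[OF assms(1)])
  fix x :: 'a
  show "norm (f x) \<le> K * norm x"
  proof (cases "x = 0")
    case False
    have "norm (f (x /\<^sub>R norm x)) \<le> K"
      using assms(2) False by simp
    then show ?thesis
      using False by (simp add: blinfun.scaleR_right field_simps)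
  qed simp
qed

lemma exists_unit_norm_apply_gt:
  fixes f :: "'a::real_normed_vector \<Rightarrow>\<^sub>L 'b::real_normed_vector"
  assumes "f \<noteq> 0" and "m < norm f"
  shows "\<exists>x. norm x = 1 \<and> m < norm (f x)"
proof (rule ccontr)
  assume "\<not> ?thesis"
  then have "norm f \<le> max m 0"
    by (intro norm_blinfun_le_unit) (auto simp: not_less)
  then show False
    using assms by (simp add: max_def split: if_splits)
qed

lemma norm_apply_tendsto_norm:
  fixes T :: "'a::real_normed_vector \<Rightarrow>\<^sub>L 'b::real_normed_vector"
  assumes "\<And>n. norm (xs n) = 1"
    and "\<And>n. norm T - inverse (real (Suc n)) < norm (T (xs n))"
  shows "(\<lambda>n. norm (T (xs n))) \<longlonglongrightarrow> norm T"
proof (rule tendsto_sandwich)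
  show "\<forall>\<^sub>F n in sequentially. norm T - inverse (real (Suc n)) \<le> norm (T (xs n))"
    using assms(2) by (simp add: less_imp_le)
  show "\<forall>\<^sub>F n in sequentially. norm (T (xs n)) \<le> norm T"
  proof (rule always_eventually, rule allI)
    show "norm (T (xs n)) \<le> norm T" for n
      using norm_blinfun[of T "xs n"] assms(1)[of n] by simp
  qed
  show "(\<lambda>n. norm T - inverse (real (Suc n))) \<longlonglongrightarrow> norm T"
    using tendsto_diff[OF tendsto_const LIMSEQ_inverse_real_of_nat] by simp
qed simp

lemma exists_maximizing_sequence:
  fixes T :: "'a::real_normed_vector \<Rightarrow>\<^sub>L 'b::real_normed_vector"
  assumes "T \<noteq> 0"
  shows "\<exists>xs. (\<forall>n. norm (xs n) = 1) \<and> (\<lambda>n. norm (T (xs n))) \<longlonglongrightarrow> norm T"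
proof -
  have "\<forall>n. \<exists>x. norm x = 1 \<and> norm T - inverse (real (Suc n)) < norm (T x)"
    using exists_unit_norm_apply_gt[OF assms] by simp
  then obtain xs where "\<And>n. norm (xs n) = 1 \<and> norm T - inverse (real (Suc n)) < norm (T (xs n))"
    by metis
  then show ?thesis
    using norm_apply_tendsto_norm by blast
qed

lemma compact_operator_convergent_subseq:
  fixes T :: "'a::real_normed_vector \<Rightarrow>\<^sub>L 'b::real_normed_vector" and xs :: "nat \<Rightarrow> 'a"
  assumes "compact_operator T" and "\<And>n. norm (xs n) \<le> 1"
  shows "\<exists>r l. strict_mono r \<and> (\<lambda>n. T (xs (r n))) \<longlonglongrightarrow> l"
proof -
  have "seq_compact (closure (blinfun_apply T ` ball 0 1))"
    using assms(1) compact_imp_seq_compact unfolding compact_operator_def by blast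
  moreover have "\<forall>n. T ((1/2) *\<^sub>R xs n) \<in> closure (blinfun_apply T ` ball 0 1)"
  proof (intro allI closure_subset[THEN subsetD] imageI)
    show "(1/2) *\<^sub>R xs n \<in> ball 0 1" for n
      using assms(2)[of n] by simp
  qed
  ultimately obtain l r where r: "strict_mono r" and l: "((\<lambda>n. T ((1/2) *\<^sub>R xs n)) \<circ> r) \<longlonglongrightarrow> l"
    using seq_compactE[of _ "\<lambda>n. T ((1/2) *\<^sub>R xs n)"] by blast
  have "(\<lambda>n. 2 *\<^sub>R T ((1/2) *\<^sub>R xs (r n))) \<longlonglongrightarrow> 2 *\<^sub>R l"
    using l unfolding o_def by (intro tendsto_intros)
  then have "(\<lambda>n. T (xs (r n))) \<longlonglongrightarrow> 2 *\<^sub>R l"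
    by (simp add: blinfun.scaleR_right)
  then show ?thesis
    using r by blast
qed

lemma norm_add_norm_le:
  fixes u v :: "'a::real_normed_vector"
  shows "norm u + norm v \<le> norm (u + v) + norm (u - v)"
proof -
  have "norm ((u + v) + (u - v)) \<le> norm (u + v) + norm (u - v)"
    by (rule norm_triangle_ineq)
  moreover have "norm ((u + v) - (u - v)) \<le> norm (u + v) + norm (u - v)"
    by (rule norm_triangle_ineq4)
  moreover have "(u + v) + (u - v) = 2 *\<^sub>R u" "(u + v) - (u - v) = 2 *\<^sub>R v"
    by (simp_all add: scaleR_2)
  ultimately show ?thesis
    by simp
qed

lemma norm_diff_sq_le_norm_defect:
  fixes T :: "'a::real_inner \<Rightarrow>\<^sub>L 'b::real_normed_vector"
  assumes "norm a = 1" and "norm b = 1"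
  shows "norm T * (norm (a - b))\<^sup>2
           \<le> 4 * ((norm T - norm (T a)) + (norm T - norm (T b)) + norm (T a - T b))"
proof -
  have "(norm (a - b))\<^sup>2 + (norm (a + b))\<^sup>2 = 2 * (norm a)\<^sup>2 + 2 * (norm b)\<^sup>2"
    by (simp add: power2_norm_eq_inner inner_add_left inner_add_right inner_diff_left
        inner_diff_right inner_commute)
  then have parallelogram: "(norm (a - b))\<^sup>2 = (2 - norm (a + b)) * (2 + norm (a + b))"
    using assms by (simp add: power2_eq_square algebra_simps)
  have "norm (a + b) \<le> 2"
    using norm_triangle_ineq[of a b] assms by simp
  then have "(2 + norm (a + b)) * (2 - norm (a + b)) \<le> 4 * (2 - norm (a + b))"
    by (intro mult_right_mono) auto
  then have "(norm (a - b))\<^sup>2 \<le> 4 * (2 - norm (a + b))"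
    unfolding parallelogram by (simp add: mult.commute)
  then have "norm T * (norm (a - b))\<^sup>2 \<le> norm T * (4 * (2 - norm (a + b)))"
    by (rule mult_left_mono) simp
  also have "\<dots> = 4 * (2 * norm T - norm T * norm (a + b))"
    by (simp add: algebra_simps)
  also have "\<dots> \<le> 4 * (2 * norm T - norm (T (a + b)))"
    using norm_blinfun[of T "a + b"] by simp
  also have "\<dots> \<le> 4 * ((norm T - norm (T a)) + (norm T - norm (T b)) + norm (T a - T b))"
    using norm_add_norm_le[of "T a" "T b"] by (simp add: blinfun.add_right)
  finally show ?thesis .
qed

lemma maximizing_sequence_Cauchy:
  fixes T :: "'a::real_inner \<Rightarrow>\<^sub>L 'b::real_normed_vector"
  assumes "T \<noteq> 0" and unit: "\<And>n. norm (y n) = 1"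
    and Ty_Cauchy: "Cauchy (\<lambda>n. T (y n))"
    and Ty_norm: "(\<lambda>n. norm (T (y n))) \<longlonglongrightarrow> norm T"
  shows "Cauchy y"
proof (rule CauchyI)
  fix e :: real
  assume "0 < e"
  have "0 < norm T"
    using assms(1) by simp
  define d where "d = norm T * e\<^sup>2 / 13"
  have "0 < d"
    using \<open>0 < e\<close> \<open>0 < norm T\<close> unfolding d_def by simp
  obtain M1 where M1: "\<forall>m\<ge>M1. \<forall>n\<ge>M1. norm (T (y m) - T (y n)) < d"
    using Ty_Cauchy \<open>0 < d\<close> unfolding Cauchy_iff by blast
  obtain M2 where M2: "\<forall>n\<ge>M2. norm T - norm (T (y n)) < d"
    using Ty_norm \<open>0 < d\<close> unfolding LIMSEQ_iff by (fastforce simp: abs_less_iff)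
  show "\<exists>M. \<forall>m\<ge>M. \<forall>n\<ge>M. norm (y m - y n) < e"
  proof (intro exI allI impI)
    fix m n
    assume "max M1 M2 \<le> m" and "max M1 M2 \<le> n"
    then have "norm (T (y m) - T (y n)) < d" "norm T - norm (T (y m)) < d" "norm T - norm (T (y n)) < d"
      using M1 M2 by auto
    have "norm T * (norm (y m - y n))\<^sup>2
        \<le> 4 * ((norm T - norm (T (y m))) + (norm T - norm (T (y n))) + norm (T (y m) - T (y n)))"
      using norm_diff_sq_le_norm_defect[OF unit unit] .
    also have "\<dots> < 12 * d"
      using \<open>norm (T (y m) - T (y n)) < d\<close> \<open>norm T - norm (T (y m)) < d\<close>
        \<open>norm T - norm (T (y n)) < d\<close> by argo
    also have "\<dots> < norm T * e\<^sup>2"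
      using \<open>0 < e\<close> \<open>0 < norm T\<close> unfolding d_def by simp
    finally show "norm (y m - y n) < e"
      using \<open>0 < norm T\<close> \<open>0 < e\<close> by (simp add: power_less_imp_less_base)
  qed
qed

lemma maximizing_sequence_subseq_tendsto:
  fixes T :: "'a::{real_inner, complete_space} \<Rightarrow>\<^sub>L 'b::real_normed_vector"
  assumes "compact_operator T" and "T \<noteq> 0"
    and unit: "\<And>n. norm (xs n) = 1"
    and maximizing: "(\<lambda>n. norm (T (xs n))) \<longlonglongrightarrow> norm T"
  shows "\<exists>r l. strict_mono r \<and> (xs \<circ> r) \<longlonglongrightarrow> l \<and> l \<in> norm_attainment_set T"
proof -
  obtain r z where r: "strict_mono r" and z: "(\<lambda>n. T (xs (r n))) \<longlonglongrightarrow> z"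
    using compact_operator_convergent_subseq[OF assms(1), of xs] unit by auto
  define y where "y = xs \<circ> r"
  have y_unit: "norm (y n) = 1" for n
    using unit y_def by simp
  have Ty_norm: "(\<lambda>n. norm (T (y n))) \<longlonglongrightarrow> norm T"
    using LIMSEQ_subseq_LIMSEQ[OF maximizing r] unfolding y_def o_def .
  have "Cauchy (\<lambda>n. T (y n))"
    using z LIMSEQ_imp_Cauchy unfolding y_def o_def by blast
  then obtain l where l: "y \<longlonglongrightarrow> l"
    using maximizing_sequence_Cauchy[OF assms(2) y_unit _ Ty_norm] Cauchy_convergent convergent_def
    by blast
  have "(\<lambda>n. norm (y n)) \<longlonglongrightarrow> norm l"
    by (intro tendsto_intros l)
  then have "norm l = 1"
    using y_unit by (simp add: LIMSEQ_const_iff)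
  have "(\<lambda>n. norm (T (y n))) \<longlonglongrightarrow> norm (T l)"
    by (intro tendsto_intros blinfun.tendsto l)
  then have "norm (T l) = norm T"
    using Ty_norm LIMSEQ_unique by blast
  then show ?thesis
    using r l \<open>norm l = 1\<close> unfolding y_def norm_attainment_set_def by blast
qed

lemma norm_attainment_set_nonempty:
  fixes T :: "'a::{real_inner, complete_space} \<Rightarrow>\<^sub>L 'b::real_normed_vector"
  assumes "compact_operator T" and "T \<noteq> 0"
  shows "norm_attainment_set T \<noteq> {}"
  using exists_maximizing_sequence[OF assms(2)] maximizing_sequence_subseq_tendsto[OF assms]
  by blast

lemma bound_near_norm_attainment_set:
  fixes T :: "'a::{real_inner, complete_space} \<Rightarrow>\<^sub>L 'b::real_normed_vector" and g :: "'a \<Rightarrow> real"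
  assumes "compact_operator T" and "T \<noteq> 0" and "\<And>x. isCont g x"
    and bound: "\<And>y. y \<in> norm_attainment_set T \<Longrightarrow> g y < b"
  shows "\<exists>\<delta>>0. \<forall>x. norm x = 1 \<longrightarrow> norm T - \<delta> < norm (T x) \<longrightarrow> g x < b"
proof (rule ccontr)
  assume contra: "\<not> ?thesis"
  have "\<exists>x. norm x = 1 \<and> norm T - inverse (real (Suc n)) < norm (T x) \<and> b \<le> g x" for n
  proof -
    have "0 < inverse (real (Suc n))"
      by simp
    then show ?thesis
      using contra by (blast intro: leI)
  qed
  then obtain xs where xs: "\<And>n. norm (xs n) = 1 \<and> norm T - inverse (real (Suc n)) < norm (T (xs n))
      \<and> b \<le> g (xs n)"
    by metis
  obtain r l where lim: "(xs \<circ> r) \<longlonglongrightarrow> l" and l: "l \<in> norm_attainment_set T"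
    using maximizing_sequence_subseq_tendsto[OF assms(1,2), of xs] norm_apply_tendsto_norm[of xs T] xs
    by blast
  have "b \<le> g l"
  proof (rule LIMSEQ_le_const)
    show "(\<lambda>n. g ((xs \<circ> r) n)) \<longlonglongrightarrow> g l"
      using isCont_tendsto_compose[OF assms(3) lim] .
    show "\<exists>N. \<forall>n\<ge>N. b \<le> g ((xs \<circ> r) n)"
      using xs by simp
  qed
  then show False
    using bound[OF l] by simp
qed

(* q z = ||T||^2 ||z||^2 - ||T z||^2 is a nonnegative quadratic form vanishing at x and y, so by
   the parallelogram law it vanishes at x + y and x - y; polarization gives the claim. *)
lemma inner_apply_norm_attaining:
  fixes T :: "'a::real_inner \<Rightarrow>\<^sub>L 'b::real_inner"
  assumes x: "norm (T x) = norm T * norm x" and y: "norm (T y) = norm T * norm y"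
  shows "inner (T x) (T y) = (norm T)\<^sup>2 * inner x y"
proof -
  define q where "q z = (norm T)\<^sup>2 * inner z z - inner (T z) (T z)" for z
  have q_nonneg: "0 \<le> q z" for z
  proof -
    have "(norm (T z))\<^sup>2 \<le> (norm T * norm z)\<^sup>2"
      using norm_blinfun[of T z] by (intro power_mono) auto
    then show ?thesis
      unfolding q_def by (simp add: power2_norm_eq_inner power_mult_distrib)
  qed
  have "q x = 0" "q y = 0"
    using x y unfolding q_def by (simp_all add: power_mult_distrib flip: power2_norm_eq_inner)
  moreover have "q (x + y) + q (x - y) = 2 * q x + 2 * q y"
    unfolding q_def by (simp add: blinfun.add_right blinfun.diff_right inner_add_left inner_add_right
        inner_diff_left inner_diff_right algebra_simps)
  ultimately have "q (x + y) = 0" "q (x - y) = 0"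
    using q_nonneg[of "x + y"] q_nonneg[of "x - y"] by linarith+
  moreover have "q (x + y) - q (x - y) = 4 * ((norm T)\<^sup>2 * inner x y - inner (T x) (T y))"
    unfolding q_def by (simp add: blinfun.add_right blinfun.diff_right inner_add_left inner_add_right
        inner_diff_left inner_diff_right inner_commute algebra_simps)
  ultimately show ?thesis
    by simp
qed

lemma norm_attainment_set_iff:
  "x \<in> norm_attainment_set T \<longleftrightarrow> norm x = 1 \<and> norm (T x) = norm T * norm x"
  unfolding norm_attainment_set_def by auto

lemma norm_attainment_set_uminus:
  "x \<in> norm_attainment_set T \<Longrightarrow> -x \<in> norm_attainment_set T"
  unfolding norm_attainment_set_def by (simp add: blinfun.minus_right)

lemma norm_attainment_set_orthogonal:
  fixes T :: "'a::real_inner \<Rightarrow>\<^sub>L 'b::real_inner"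
  assumes x: "x \<in> norm_attainment_set T" and y: "y \<in> norm_attainment_set T"
    and "y \<noteq> x" and "y \<noteq> -x"
  shows "\<exists>u\<in>norm_attainment_set T. inner x u = 0"
proof -
  have x_attains: "norm x = 1" "norm (T x) = norm T * norm x"
    and y_attains: "norm y = 1" "norm (T y) = norm T * norm y"
    using x y by (simp_all add: norm_attainment_set_iff)
  define z where "z = y - inner x y *\<^sub>R x"
  have "z \<noteq> 0"
  proof
    assume "z = 0"
    then have "y = inner x y *\<^sub>R x"
      unfolding z_def by simp
    moreover from this have "\<bar>inner x y\<bar> = 1"
      using x_attains y_attains by (metis norm_scaleR mult.right_neutral real_norm_def)
    ultimately show False
      using assms(3,4) by (auto simp: abs_if split: if_splits)
  qed
  have "(norm (T z))\<^sup>2 = (norm T * norm z)\<^sup>2"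
    using inner_apply_norm_attaining[OF x_attains(2) x_attains(2)]
      inner_apply_norm_attaining[OF x_attains(2) y_attains(2)]
      inner_apply_norm_attaining[OF y_attains(2) y_attains(2)]
    unfolding z_def power2_norm_eq_inner power_mult_distrib
    by (simp add: blinfun.diff_right blinfun.scaleR_right inner_diff_left inner_diff_right
        inner_commute algebra_simps)
  then have "norm (T z) = norm T * norm z"
    by (simp add: power2_eq_iff_nonneg)
  define u where "u = z /\<^sub>R norm z"
  have "u \<in> norm_attainment_set T"
    using \<open>z \<noteq> 0\<close> \<open>norm (T z) = norm T * norm z\<close>
    unfolding u_def norm_attainment_set_iff by (simp add: blinfun.scaleR_right)
  moreover have "inner x u = 0"
    using x_attains(1) unfolding u_def z_def
    by (simp add: inner_diff_right flip: power2_norm_eq_inner)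
  ultimately show ?thesis
    by blast
qed

definition norm_attainment_functional ::
    "('a::real_normed_vector \<Rightarrow>\<^sub>L 'b::real_inner) \<Rightarrow> 'a \<Rightarrow> ('a \<Rightarrow>\<^sub>L 'b) \<Rightarrow>\<^sub>L real" where
  "norm_attainment_functional T x = Blinfun (\<lambda>A::'a \<Rightarrow>\<^sub>L 'b. inner (A x) (T x /\<^sub>R norm T))"

lemma norm_attainment_functional_apply:
  "norm_attainment_functional T x A = inner (A x) (T x) / norm T"
proof -
  have "bounded_linear (\<lambda>A::'a \<Rightarrow>\<^sub>L 'b. inner (A x) (T x /\<^sub>R norm T))"
    by (intro bounded_linear_inner_left_comp blinfun.bounded_linear_left)
  then show ?thesis
    unfolding norm_attainment_functional_def by (simp add: bounded_linear_Blinfun_apply divide_inverse)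
qed

lemma norm_attainment_functional_in_support_functionals:
  fixes T :: "'a::real_normed_vector \<Rightarrow>\<^sub>L 'b::real_inner"
  assumes "T \<noteq> 0" and "x \<in> norm_attainment_set T"
  shows "norm_attainment_functional T x \<in> support_functionals T"
proof -
  have x: "norm x = 1" "norm (T x) = norm T"
    using assms(2) unfolding norm_attainment_set_def by auto
  have "0 < norm T"
    using assms(1) by simp
  have at_T: "norm_attainment_functional T x T = norm T"
    using \<open>0 < norm T\<close> x by (simp add: norm_attainment_functional_apply power2_eq_square
        flip: power2_norm_eq_inner)
  have "norm (norm_attainment_functional T x) \<le> 1"
  proof (rule norm_blinfun_bound)
    fix A :: "'a \<Rightarrow>\<^sub>L 'b"
    have "\<bar>inner (A x) (T x)\<bar> \<le> norm (A x) * norm (T x)"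
      by (rule Cauchy_Schwarz_ineq2)
    also have "\<dots> \<le> norm A * norm T"
      using x norm_blinfun[of A x] by (simp add: mult_right_mono)
    finally show "norm (norm_attainment_functional T x A) \<le> 1 * norm A"
      using \<open>0 < norm T\<close> by (simp add: norm_attainment_functional_apply divide_le_eq)
  qed simp
  moreover have "1 \<le> norm (norm_attainment_functional T x)"
    using norm_blinfun[of "norm_attainment_functional T x" T] at_T \<open>0 < norm T\<close> by simp
  ultimately show ?thesis
    using at_T unfolding support_functionals_def by simp
qed

lemma norm_attainment_functional_orthogonal_dist:
  fixes T :: "'a::real_inner \<Rightarrow>\<^sub>L 'b::real_inner"
  assumes "T \<noteq> 0" and x: "x \<in> norm_attainment_set T" and u: "u \<in> norm_attainment_set T"
    and "inner x u = 0"
  shows "2 \<le> norm (norm_attainment_functional T x - norm_attainment_functional T u)"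
proof -
  have "0 < norm T"
    using assms(1) by simp
  have unit: "inner x x = 1" "inner u u = 1"
    and attains: "norm (T x) = norm T" "norm (T u) = norm T"
    using x u unfolding norm_attainment_set_def by (auto simp flip: power2_norm_eq_inner)
  define p where "p w = inner w x *\<^sub>R x - inner w u *\<^sub>R u" for w
  have "bounded_linear p"
    unfolding p_def by (intro bounded_linear_intros)
  define P where "P = Blinfun p"
  have P_apply: "P w = inner w x *\<^sub>R x - inner w u *\<^sub>R u" for w
    using \<open>bounded_linear p\<close> unfolding P_def p_def by (simp add: bounded_linear_Blinfun_apply)
  have "norm P \<le> 1"
  proof (rule norm_blinfun_bound)
    fix w :: 'a
    have "0 \<le> inner (w - inner w x *\<^sub>R x - inner w u *\<^sub>R u) (w - inner w x *\<^sub>R x - inner w u *\<^sub>R u)"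
      by simp
    also have "\<dots> = inner w w - inner (P w) (P w)"
      using unit \<open>inner x u = 0\<close> unfolding P_apply
      by (simp add: inner_diff_left inner_diff_right inner_commute power2_eq_square algebra_simps)
    finally show "norm (P w) \<le> 1 * norm w"
      by (simp add: norm_eq_sqrt_inner)
  qed simp
  define A where "A = T o\<^sub>L P"
  have "norm A \<le> norm T"
    using order_trans[OF norm_blinfun_compose mult_left_le[OF \<open>norm P \<le> 1\<close> norm_ge_zero]]
    unfolding A_def .
  have "A x = T x" "A u = - T u"
    using unit \<open>inner x u = 0\<close> by (simp_all add: A_def P_apply inner_commute blinfun.minus_right)
  define F where "F = norm_attainment_functional T x - norm_attainment_functional T u"
  have "2 * norm T = F A"
    using \<open>A x = T x\<close> \<open>A u = - T u\<close> attains \<open>0 < norm T\<close>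
    by (simp add: F_def minus_blinfun.rep_eq norm_attainment_functional_apply power2_eq_square
        field_simps flip: power2_norm_eq_inner)
  also have "\<dots> \<le> norm F * norm A"
    using abs_le_D1[OF norm_blinfun[of F A, unfolded real_norm_def]] .
  also have "\<dots> \<le> norm F * norm T"
    using \<open>norm A \<le> norm T\<close> by (intro mult_left_mono) simp_all
  finally show ?thesis
    using \<open>0 < norm T\<close> unfolding F_def by simp
qed

lemma norm_attainment_set_eq_if_eps_smooth:
  fixes T :: "'a::{real_inner, complete_space} \<Rightarrow>\<^sub>L 'b::real_inner"
  assumes "compact_operator T" and "T \<noteq> 0" and "eps_smooth_point T \<epsilon>" and "\<epsilon> < 2"
  shows "\<exists>x0. norm x0 = 1 \<and> norm_attainment_set T = {x0, -x0}"
proof -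
  obtain x where x: "x \<in> norm_attainment_set T"
    using norm_attainment_set_nonempty[OF assms(1,2)] by blast
  have "y = x \<or> y = -x" if y: "y \<in> norm_attainment_set T" for y
  proof (rule ccontr)
    assume "\<not> (y = x \<or> y = -x)"
    then obtain u where u: "u \<in> norm_attainment_set T" and "inner x u = 0"
      using norm_attainment_set_orthogonal[OF x y] by blast
    have "2 \<le> norm (norm_attainment_functional T x - norm_attainment_functional T u)"
      using norm_attainment_functional_orthogonal_dist[OF assms(2) x u \<open>inner x u = 0\<close>] .
    also have "\<dots> \<le> \<epsilon>"
      using assms(3) norm_attainment_functional_in_support_functionals[OF assms(2)] x u
      unfolding eps_smooth_point_def by blast
    finally show False
      using assms(4) by simp
  qed
  moreover have "norm x = 1"
    using x unfolding norm_attainment_set_def by simp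
  ultimately show ?thesis
    using x norm_attainment_set_uminus[OF x] by blast
qed

lemma norm_add_scaleR_le:
  fixes T A :: "'a::real_normed_vector \<Rightarrow>\<^sub>L 'b::real_inner"
  assumes "T \<noteq> 0" and "0 \<le> t"
    and near: "\<And>x. norm x = 1 \<Longrightarrow> norm T - \<delta> < norm (T x) \<Longrightarrow> inner (A x) (T x) \<le> b"
  shows "norm (T + t *\<^sub>R A)
           \<le> max (norm T - \<delta> + t * norm A) (sqrt ((norm T)\<^sup>2 + 2 * t * b + t\<^sup>2 * (norm A)\<^sup>2))"
    (is "_ \<le> ?K")
proof -
  have bound: "norm ((T + t *\<^sub>R A) x) \<le> ?K" if "norm x = 1" for x
  proof -
    have Tx: "norm (T x) \<le> norm T" and Ax: "norm (A x) \<le> norm A"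
      using norm_blinfun[of T x] norm_blinfun[of A x] \<open>norm x = 1\<close> by simp_all
    have apply_eq: "(T + t *\<^sub>R A) x = T x + t *\<^sub>R A x"
      by (simp add: plus_blinfun.rep_eq scaleR_blinfun.rep_eq)
    show ?thesis
    proof (cases "norm T - \<delta> < norm (T x)")
      case True
      have "(norm ((T + t *\<^sub>R A) x))\<^sup>2
          = (norm (T x))\<^sup>2 + 2 * t * inner (A x) (T x) + t\<^sup>2 * (norm (A x))\<^sup>2"
        unfolding apply_eq power2_norm_eq_inner
        by (simp add: inner_add_left inner_add_right inner_commute algebra_simps power2_eq_square)
      also have "\<dots> \<le> (norm T)\<^sup>2 + 2 * t * b + t\<^sup>2 * (norm A)\<^sup>2"
        using Tx Ax near[OF \<open>norm x = 1\<close> True] \<open>0 \<le> t\<close>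
        by (intro add_mono mult_left_mono power_mono) auto
      finally have "norm ((T + t *\<^sub>R A) x) \<le> sqrt ((norm T)\<^sup>2 + 2 * t * b + t\<^sup>2 * (norm A)\<^sup>2)"
        by (rule real_le_rsqrt)
      then show ?thesis
        by simp
    next
      case False
      have "norm ((T + t *\<^sub>R A) x) \<le> norm (T x) + t * norm (A x)"
        using norm_triangle_ineq[of "T x" "t *\<^sub>R A x"] \<open>0 \<le> t\<close> by (simp add: apply_eq)
      also have "\<dots> \<le> norm T - \<delta> + t * norm A"
        using False Ax \<open>0 \<le> t\<close> by (simp add: mult_left_mono add_mono)
      finally show ?thesis
        by simp
    qed
  qed
  obtain x :: 'a where "norm x = 1"
    using exists_unit_norm_apply_gt[OF assms(1), of 0] assms(1) by auto
  then have "0 \<le> ?K"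
    using bound[of x] norm_ge_zero order_trans by blast
  then show ?thesis
    using bound by (rule norm_blinfun_le_unit)
qed

(* phi (T + t A) = ||T|| + t phi A <= ||T + t A||.  For such small t the left-hand side exceeds the
   first alternative of norm_add_scaleR_le, and comparing with the second one gives the claim. *)
lemma support_functional_apply_le_approx:
  fixes T A :: "'a::real_normed_vector \<Rightarrow>\<^sub>L 'b::real_inner"
  assumes "\<phi> \<in> support_functionals T" and "T \<noteq> 0" and "0 < t"
    and "2 * (t * norm A) < \<delta>" and "t * norm A < norm T"
    and near: "\<And>x. norm x = 1 \<Longrightarrow> norm T - \<delta> < norm (T x) \<Longrightarrow> inner (A x) (T x) \<le> b"
  shows "norm T * \<phi> A \<le> b + t * (norm A)\<^sup>2 / 2"
proof -
  define c a p where "c = norm T" and "a = norm A" and "p = \<phi> A"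
  have "\<bar>p\<bar> \<le> a"
    using norm_blinfun[of \<phi> A] assms(1) unfolding support_functionals_def p_def a_def by simp
  then have "- (t * a) \<le> t * p"
    using mult_left_mono[of "- a" p t] \<open>0 < t\<close> by simp
  then have "0 < c + t * p" and "c - \<delta> + t * a < c + t * p"
    using assms(4,5) unfolding c_def a_def by linarith+
  have "c + t * p = \<phi> (T + t *\<^sub>R A)"
    using assms(1) unfolding support_functionals_def c_def p_def
    by (simp add: blinfun.add_right blinfun.scaleR_right)
  also have "\<dots> \<le> norm (T + t *\<^sub>R A)"
    using norm_blinfun[of \<phi> "T + t *\<^sub>R A"] assms(1) unfolding support_functionals_def by simp
  also have "\<dots> \<le> max (c - \<delta> + t * a) (sqrt (c\<^sup>2 + 2 * t * b + t\<^sup>2 * a\<^sup>2))"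
    unfolding c_def a_def using assms(2) \<open>0 < t\<close> near by (intro norm_add_scaleR_le) auto
  finally have "c + t * p \<le> sqrt (c\<^sup>2 + 2 * t * b + t\<^sup>2 * a\<^sup>2)"
    using \<open>c - \<delta> + t * a < c + t * p\<close> by (simp add: le_max_iff_disj)
  then have "(c + t * p)\<^sup>2 \<le> c\<^sup>2 + 2 * t * b + t\<^sup>2 * a\<^sup>2"
    using \<open>0 < c + t * p\<close> by (intro sqrt_ge_absD) simp
  then have "t * (2 * (c * p)) + (t * p)\<^sup>2 \<le> t * (2 * b + t * a\<^sup>2)"
    by (simp add: power2_eq_square algebra_simps)
  then have "t * (2 * (c * p)) \<le> t * (2 * b + t * a\<^sup>2)"
    using zero_le_power2[of "t * p"] by linarith
  then have "2 * (c * p) \<le> 2 * b + t * a\<^sup>2"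
    using \<open>0 < t\<close> by (rule mult_left_le_imp_le)
  then show ?thesis
    unfolding c_def a_def p_def by simp
qed

lemma support_functional_le_if_near_bound:
  fixes T A :: "'a::real_normed_vector \<Rightarrow>\<^sub>L 'b::real_inner"
  assumes "\<phi> \<in> support_functionals T" and "T \<noteq> 0" and "0 < \<delta>"
    and near: "\<And>x. norm x = 1 \<Longrightarrow> norm T - \<delta> < norm (T x) \<Longrightarrow> inner (A x) (T x) \<le> b"
  shows "norm T * \<phi> A \<le> b"
proof (rule field_le_epsilon)
  fix e :: real
  assume "0 < e"
  define c a where "c = norm T" and "a = norm A"
  have "0 < c" "0 \<le> a"
    using assms(2) unfolding c_def a_def by simp_all
  define t where "t = min (\<delta> / (2 * a + 1)) (min (c / (a + 1)) (e / (a\<^sup>2 + 1)))"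
  have "0 < t"
    using \<open>0 < \<delta>\<close> \<open>0 < c\<close> \<open>0 < e\<close> \<open>0 \<le> a\<close> unfolding t_def by (simp add: add_nonneg_pos)
  have "t \<le> \<delta> / (2 * a + 1)" "t \<le> c / (a + 1)" "t \<le> e / (a\<^sup>2 + 1)"
    unfolding t_def by simp_all
  then have "t * (2 * a + 1) \<le> \<delta>" "t * (a + 1) \<le> c" "t * (a\<^sup>2 + 1) \<le> e"
    using \<open>0 \<le> a\<close> by (simp_all add: pos_le_divide_eq add_nonneg_pos)
  then have "2 * (t * a) < \<delta>" "t * a < c" "t * a\<^sup>2 < e"
    using \<open>0 < t\<close> by (simp_all add: algebra_simps)
  then have "norm T * \<phi> A \<le> b + t * a\<^sup>2 / 2"
    using support_functional_apply_le_approx[OF assms(1,2) \<open>0 < t\<close> _ _ near]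
    unfolding c_def a_def by blast
  then show "norm T * \<phi> A \<le> b + e"
    using \<open>t * a\<^sup>2 < e\<close> \<open>0 < e\<close> by linarith
qed

lemma support_functional_le_norm_attainment_functional:
  fixes T :: "'a::{real_inner, complete_space} \<Rightarrow>\<^sub>L 'b::real_inner"
  assumes "compact_operator T" and "T \<noteq> 0" and M: "norm_attainment_set T = {x0, -x0}"
    and "\<phi> \<in> support_functionals T"
  shows "\<phi> A \<le> norm_attainment_functional T x0 A"
proof -
  have "norm T * \<phi> A \<le> inner (A x0) (T x0)"
  proof (rule field_le_epsilon)
    fix \<eta> :: real
    assume "0 < \<eta>"
    have "isCont (\<lambda>x. inner (A x) (T x)) x" for x
      by (intro continuous_intros blinfun.continuous)
    moreover have "inner (A y) (T y) < inner (A x0) (T x0) + \<eta>" if "y \<in> norm_attainment_set T" for y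
      using that M \<open>0 < \<eta>\<close> by (auto simp: blinfun.minus_right)
    ultimately obtain \<delta> where "0 < \<delta>"
      and "\<forall>x. norm x = 1 \<longrightarrow> norm T - \<delta> < norm (T x) \<longrightarrow> inner (A x) (T x) < inner (A x0) (T x0) + \<eta>"
      using bound_near_norm_attainment_set[OF assms(1,2)] by blast
    then show "norm T * \<phi> A \<le> inner (A x0) (T x0) + \<eta>"
      using support_functional_le_if_near_bound[OF assms(4,2)] by (meson less_imp_le)
  qed
  then show ?thesis
    using assms(2) by (simp add: norm_attainment_functional_apply field_simps)
qed

lemma smooth_point_if_norm_attainment_set_eq:
  fixes T :: "'a::{real_inner, complete_space} \<Rightarrow>\<^sub>L 'b::real_inner"
  assumes "compact_operator T" and "T \<noteq> 0" and M: "norm_attainment_set T = {x0, -x0}"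
  shows "smooth_point T"
proof -
  have "\<phi> = norm_attainment_functional T x0" if "\<phi> \<in> support_functionals T" for \<phi>
  proof (rule blinfun_eqI)
    fix A
    show "\<phi> A = norm_attainment_functional T x0 A"
      using support_functional_le_norm_attainment_functional[OF assms that, of A]
        support_functional_le_norm_attainment_functional[OF assms that, of "- A"]
      by (simp add: blinfun.minus_right)
  qed
  moreover have "norm_attainment_functional T x0 \<in> support_functionals T"
    using norm_attainment_functional_in_support_functionals[OF assms(2)] M by simp
  ultimately have "support_functionals T = {norm_attainment_functional T x0}"
    by blast
  then show ?thesis
    using assms(2) unfolding smooth_point_def by blast
qed

lemma eps_smooth_point_if_smooth_point:
  "smooth_point z \<Longrightarrow> eps_smooth_point z 0"
  unfolding smooth_point_def eps_smooth_point_def by auto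

theorem theorem3p2:
  fixes T :: "'a::{real_inner, complete_space} \<Rightarrow>\<^sub>L 'a"
  assumes "compact_operator T" and "T \<noteq> 0"
  shows "((\<exists>\<epsilon>. 0 \<le> \<epsilon> \<and> \<epsilon> < 2 \<and> eps_smooth_point T \<epsilon>)
            \<longleftrightarrow> (\<exists>x0. norm x0 = 1 \<and> norm_attainment_set T = {x0, -x0}))
       \<and> ((\<exists>x0. norm x0 = 1 \<and> norm_attainment_set T = {x0, -x0})
            \<longleftrightarrow> smooth_point T)"
proof -
  have i_ii: "(\<exists>\<epsilon>. 0 \<le> \<epsilon> \<and> \<epsilon> < 2 \<and> eps_smooth_point T \<epsilon>)
      \<Longrightarrow> (\<exists>x0. norm x0 = 1 \<and> norm_attainment_set T = {x0, -x0})"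
    using norm_attainment_set_eq_if_eps_smooth[OF assms] by blast
  have ii_iii: "(\<exists>x0. norm x0 = 1 \<and> norm_attainment_set T = {x0, -x0}) \<Longrightarrow> smooth_point T"
    using smooth_point_if_norm_attainment_set_eq[OF assms] by blast
  have iii_i: "smooth_point T \<Longrightarrow> (\<exists>\<epsilon>. 0 \<le> \<epsilon> \<and> \<epsilon> < 2 \<and> eps_smooth_point T \<epsilon>)"
    using eps_smooth_point_if_smooth_point by fastforce
  show ?thesis
    using i_ii ii_iii iii_i by blast
qed

end
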